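(* Let $D=(V,E;s,t)$, $N$ be as in the context, let $x\in\mathcal{C}(\widetilde\Gamma_D)$ and let $e\in N$. If there exists a maximum-cardinality family of $s$-$t$ paths pairwise disjoint on $N$ none of whose paths contains $e$, then $x(e)=0$.
   Context: $D=(V,E;s,t)$ is a directed network with unit arc capacities (parallel arcs allowed); $N\subseteq E$ is the set of private arcs (players), $M=E\setminus N$ public arcs; every $s$-$t$ path contains an arc of $N$ and every arc lies on some $s$-$t$ path. Two paths are disjoint on $N$ if they share no arc of $N$; $\sigma_N$ is the maximum number of $s$-$t$ paths pairwise disjoint on $N$. For $S\subseteq N$, $\gamma(S)$ is the maximum number of pairwise arc-disjoint $s$-$t$ paths in $D_S=(V,S\cup M;s,t)$. The auxiliary game $\widetilde\Gamma_D=(N,\tilde\gamma)$ has $\tilde\gamma(N)=\sigma_N$ and $\tilde\gamma(S)=\gamma(S)$ for $S\subsetneq N$; its core is $\mathcal{C}(\widetilde\Gamma_D)=\{x\in\mathbb{R}^N_{\ge0}:x(N)=\sigma_N,\ x(S)\ge\tilde\gamma(S)\ \forall S\subseteq N\}$, with $x(S)=\sum_{i\in S}x_i$. *)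

theory Defs
  imports Complex_Main
begin

text \<open>A directed multigraph is given by a finite arc set E of an arbitrary type 'e
  together with tail map src and head map dst (parallel arcs allowed).\<close>

definition st_path :: "('e \<Rightarrow> 'v) \<Rightarrow> ('e \<Rightarrow> 'v) \<Rightarrow> 'e set \<Rightarrow> 'v \<Rightarrow> 'v \<Rightarrow> 'e list \<Rightarrow> bool" where
  "st_path src dst A s t p \<longleftrightarrow>
     p \<noteq> [] \<and> set p \<subseteq> A \<and> src (p ! 0) = s \<and> dst (last p) = t \<and>
     (\<forall>i. Suc i < length p \<longrightarrow> dst (p ! i) = src (p ! Suc i)) \<and>
     distinct (s # map dst p)"

definition disjoint_on :: "'e set \<Rightarrow> 'e list set \<Rightarrow> bool" where
  "disjoint_on F P \<longleftrightarrow> (\<forall>p\<in>P. \<forall>q\<in>P. p \<noteq> q \<longrightarrow> set p \<inter> set q \<inter> F = {})"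

definition sigmaN :: "('e \<Rightarrow> 'v) \<Rightarrow> ('e \<Rightarrow> 'v) \<Rightarrow> 'e set \<Rightarrow> 'e set \<Rightarrow> 'v \<Rightarrow> 'v \<Rightarrow> nat" where
  "sigmaN src dst E N s t =
     Max {card P | P. finite P \<and> (\<forall>p\<in>P. st_path src dst E s t p) \<and> disjoint_on N P}"

definition gammaS :: "('e \<Rightarrow> 'v) \<Rightarrow> ('e \<Rightarrow> 'v) \<Rightarrow> 'e set \<Rightarrow> 'e set \<Rightarrow> 'v \<Rightarrow> 'v \<Rightarrow> 'e set \<Rightarrow> nat" where
  "gammaS src dst E N s t S =
     Max {card P | P. finite P \<and> (\<forall>p\<in>P. st_path src dst (S \<union> (E - N)) s t p) \<and> disjoint_on E P}"

definition gamma_tilde :: "('e \<Rightarrow> 'v) \<Rightarrow> ('e \<Rightarrow> 'v) \<Rightarrow> 'e set \<Rightarrow> 'e set \<Rightarrow> 'v \<Rightarrow> 'v \<Rightarrow> 'e set \<Rightarrow> nat" where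
  "gamma_tilde src dst E N s t S =
     (if S = N then sigmaN src dst E N s t else gammaS src dst E N s t S)"

text \<open>Core of the auxiliary game; allocations are functions on arcs, only values on N matter.\<close>
definition core_tilde :: "('e \<Rightarrow> 'v) \<Rightarrow> ('e \<Rightarrow> 'v) \<Rightarrow> 'e set \<Rightarrow> 'e set \<Rightarrow> 'v \<Rightarrow> 'v \<Rightarrow> ('e \<Rightarrow> real) set" where
  "core_tilde src dst E N s t =
     {x. (\<forall>i\<in>N. 0 \<le> x i) \<and> sum x N = real (sigmaN src dst E N s t) \<and>
         (\<forall>S. S \<subseteq> N \<longrightarrow> real (gamma_tilde src dst E N s t S) \<le> sum x S)}"

end

theory Submission
  imports Defs
begin

text \<open>Let P be a maximum family of s-t paths disjoint on N avoiding e. Every p \<in> P meets N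
  in a proper subset S(p) of N (it misses e), and p itself is an s-t path of D_S(p), so
  x(S(p)) \<ge> \<gamma>(S(p)) \<ge> 1. The sets S(p) are pairwise disjoint and do not contain e, hence
  \<sigma>_N = x(N) \<ge> |P| + x(e) = \<sigma>_N + x(e), and x(e) \<ge> 0 forces x(e) = 0.\<close>

lemma st_path_length_le_card:
  assumes "finite V" and "\<forall>a\<in>A. dst a \<in> V" and "st_path src dst A s t p"
  shows "length p \<le> card V"
proof -
  have "distinct (map dst p)" and "set p \<subseteq> A"
    using assms(3) unfolding st_path_def by auto
  then have "length p = card (dst ` set p)"
    using distinct_card by fastforce
  also have "\<dots> \<le> card V"
    using \<open>set p \<subseteq> A\<close> assms(1,2) by (intro card_mono) auto
  finally show ?thesis .
qed

lemma finite_st_path_family_cards: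
  assumes "finite V" and "finite A" and "\<forall>a\<in>A. dst a \<in> V"
  shows "finite {card P | P. finite P \<and> (\<forall>p\<in>P. st_path src dst A s t p) \<and> R P}"
proof (rule finite_subset)
  let ?L = "{p. set p \<subseteq> A \<and> length p \<le> card V}"
  show "{card P | P. finite P \<and> (\<forall>p\<in>P. st_path src dst A s t p) \<and> R P}
      \<subseteq> {..card ?L}"
  proof clarify
    fix P assume paths: "\<forall>p\<in>P. st_path src dst A s t p"
    have "P \<subseteq> ?L"
    proof
      fix p assume "p \<in> P"
      then have p: "st_path src dst A s t p"
        using paths by blast
      then have "set p \<subseteq> A"
        unfolding st_path_def by blast
      moreover have "length p \<le> card V"
        using assms(1,3) p by (rule st_path_length_le_card)
      ultimately show "p \<in> ?L"
        by simp
    qed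
    moreover have "finite ?L"
      using assms(2) by (rule finite_lists_length_le)
    ultimately show "card P \<le> card ?L"
      by (rule card_mono[rotated])
  qed
qed simp

lemma one_le_gammaS:
  assumes "finite V" and "finite E" and "\<forall>a\<in>E. dst a \<in> V" and "S \<subseteq> E"
    and "st_path src dst (S \<union> (E - N)) s t p"
  shows "1 \<le> gammaS src dst E N s t S"
proof -
  have "finite {card P | P. finite P \<and> (\<forall>p\<in>P. st_path src dst (S \<union> (E - N)) s t p)
      \<and> disjoint_on E P}"
    using assms(1-4) by (intro finite_st_path_family_cards) (auto intro: finite_subset)
  moreover have "card {p} \<in> {card P | P. finite P
      \<and> (\<forall>p\<in>P. st_path src dst (S \<union> (E - N)) s t p) \<and> disjoint_on E P}"
    using assms(5) unfolding disjoint_on_def by blast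
  ultimately show ?thesis
    unfolding gammaS_def using Max_ge by fastforce
qed

lemma core_tilde_path_weight_ge_1:
  assumes "finite V" and "finite E" and "\<forall>a\<in>E. dst a \<in> V" and "N \<subseteq> E"
    and "x \<in> core_tilde src dst E N s t"
    and "st_path src dst E s t p" and "\<not> N \<subseteq> set p"
  shows "1 \<le> sum x (set p \<inter> N)"
proof -
  have "st_path src dst ((set p \<inter> N) \<union> (E - N)) s t p"
    using assms(6) unfolding st_path_def by auto
  then have "1 \<le> gammaS src dst E N s t (set p \<inter> N)"
    using assms(1-4) by (intro one_le_gammaS) auto
  moreover have "real (gamma_tilde src dst E N s t (set p \<inter> N)) \<le> sum x (set p \<inter> N)"
    using assms(5) unfolding core_tilde_def by blast
  moreover have "set p \<inter> N \<noteq> N"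
    using assms(7) by blast
  ultimately show ?thesis
    unfolding gamma_tilde_def by simp
qed

lemma card_plus_le_sum_disjoint_on:
  fixes x :: "'a \<Rightarrow> real"
  assumes "finite N" and "\<forall>i\<in>N. 0 \<le> x i" and "finite P" and "disjoint_on N P"
    and "\<forall>p\<in>P. 1 \<le> sum x (set p \<inter> N)"
    and "e \<in> N" and "\<forall>p\<in>P. e \<notin> set p"
  shows "real (card P) + x e \<le> sum x N"
proof -
  let ?U = "\<Union>p\<in>P. set p \<inter> N"
  have "real (card P) = (\<Sum>p\<in>P. 1)"
    by simp
  also have "\<dots> \<le> (\<Sum>p\<in>P. sum x (set p \<inter> N))"
    using assms(5) by (intro sum_mono) auto
  also have "\<dots> = sum x ?U"
    using assms(1,3,4) by (intro sum.UNION_disjoint[symmetric]) (auto simp: disjoint_on_def)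
  finally have "real (card P) \<le> sum x ?U" .
  moreover have "x e \<le> sum x (N - ?U)"
    using assms(1,2,6,7) by (intro member_le_sum) auto
  moreover have "sum x N = sum x ?U + sum x (N - ?U)"
    using assms(1) by (subst sum.subset_diff[of ?U]) auto
  ultimately show ?thesis
    by linarith
qed

theorem lemma7:
  fixes V :: "'v set" and E N :: "'e set" and src dst :: "'e \<Rightarrow> 'v"
    and s t :: 'v and x :: "'e \<Rightarrow> real" and e :: 'e
  assumes "finite V" and "finite E"
    and "\<forall>a\<in>E. src a \<in> V \<and> dst a \<in> V"
    and "s \<in> V" and "t \<in> V" and "s \<noteq> t"
    and "N \<subseteq> E"
    and "\<forall>p. st_path src dst E s t p \<longrightarrow> set p \<inter> N \<noteq> {}"
    and "\<forall>a\<in>E. \<exists>p. st_path src dst E s t p \<and> a \<in> set p"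
    and "x \<in> core_tilde src dst E N s t"
    and "e \<in> N"
    and "\<exists>P. finite P \<and> (\<forall>p\<in>P. st_path src dst E s t p) \<and> disjoint_on N P
              \<and> card P = sigmaN src dst E N s t \<and> (\<forall>p\<in>P. e \<notin> set p)"
  shows "x e = 0"
proof -
  obtain P where "finite P" and paths: "\<forall>p\<in>P. st_path src dst E s t p"
    and "disjoint_on N P" and card_P: "card P = sigmaN src dst E N s t"
    and avoid_e: "\<forall>p\<in>P. e \<notin> set p"
    using assms(12) by blast
  have nonneg: "\<forall>i\<in>N. 0 \<le> x i" and total: "sum x N = real (sigmaN src dst E N s t)"
    using assms(10) unfolding core_tilde_def by auto
  have "finite N"
    using assms(2,7) by (rule finite_subset[rotated])
  have "\<forall>a\<in>E. dst a \<in> V"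
    using assms(3) by blast
  then have "\<forall>p\<in>P. 1 \<le> sum x (set p \<inter> N)"
    using core_tilde_path_weight_ge_1[OF assms(1,2) _ assms(7,10)] paths avoid_e assms(11) by blast
  then have "real (card P) + x e \<le> sum x N"
    by (rule card_plus_le_sum_disjoint_on[OF \<open>finite N\<close> nonneg \<open>finite P\<close> \<open>disjoint_on N P\<close>
          _ assms(11) avoid_e])
  then show ?thesis
    using card_P total nonneg assms(11) by force
qed

end
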